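(* Let $X$ and $Y$ be two Jordan curves in $\mathbb{R}^2$, with interiors (bounded complementary components) $\mathcal{B}_X$ and $\mathcal{B}_Y$. If $f:\mathcal{B}_X\to\mathbb{R}^2$ is a bounded local homeomorphism that has a continuous extension to the boundary $X$ such that $f(X)\subset Y$, then $f:\mathcal{B}_X\to\mathcal{B}_Y$ is a global homeomorphism. *)

theory Defs
  imports "HOL-Analysis.Analysis"
begin

definition jordan_curve :: "complex set \<Rightarrow> bool" where
  "jordan_curve X \<longleftrightarrow>
     (\<exists>c. simple_path c \<and> pathfinish c = pathstart c \<and> path_image c = X)"

definition local_homeomorphism_on :: "'a::topological_space set \<Rightarrow> ('a \<Rightarrow> 'b::topological_space) \<Rightarrow> bool" where
  "local_homeomorphism_on S f \<longleftrightarrow>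
     (\<forall>x\<in>S. \<exists>U V g. x \<in> U \<and> open U \<and> U \<subseteq> S \<and> open V \<and> homeomorphism U V f g)"

end

(*
  The image W = f(B_X) is open, because local homeomorphisms are open maps, and bounded by
  hypothesis; since B_X is compact up to its boundary X and F(X) \<subseteq> Y, the frontier of W lies
  in Y. A nonempty bounded open set whose frontier lies in a Jordan curve is its interior, so
  W = B_Y. As F maps X into Y, away from B_Y, the map f : B_X \<rightarrow> B_Y is proper, and a proper
  local homeomorphism is a covering map. The base B_Y is simply connected and B_X is connected,
  so the covering has a single sheet, i.e. f is a homeomorphism.
*)
theory Submission
  imports Defs "HOL-Complex_Analysis.Riemann_Mapping"
begin

lemma local_homeomorphism_onE:
  assumes "local_homeomorphism_on S f" "x \<in> S"
  obtains U V g where "x \<in> U" "open U" "U \<subseteq> S" "open V" "homeomorphism U V f g"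
  using assms unfolding local_homeomorphism_on_def by metis

lemma local_homeomorphism_on_imp_open:
  assumes "local_homeomorphism_on S f"
  shows "open S"
  unfolding open_subopen[of S]
proof
  fix x assume "x \<in> S"
  then obtain U V g where "x \<in> U" "open U" "U \<subseteq> S" "open V" "homeomorphism U V f g"
    by (rule local_homeomorphism_onE[OF assms])
  then show "\<exists>T. open T \<and> x \<in> T \<and> T \<subseteq> S"
    by blast
qed

lemma local_homeomorphism_on_imp_continuous_on:
  assumes "local_homeomorphism_on S f"
  shows "continuous_on S f"
proof -
  define \<U> where "\<U> = {U. open U \<and> U \<subseteq> S \<and> (\<exists>V g. homeomorphism U V f g)}"
  have "S \<subseteq> \<Union>\<U>"
  proof
    fix x assume "x \<in> S"
    then obtain U V g where "x \<in> U" "open U" "U \<subseteq> S" "open V" "homeomorphism U V f g"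
      by (rule local_homeomorphism_onE[OF assms])
    then show "x \<in> \<Union>\<U>"
      unfolding \<U>_def by blast
  qed
  moreover have "\<Union>\<U> \<subseteq> S"
    unfolding \<U>_def by blast
  ultimately have "S = \<Union>\<U>"
    by (rule antisym)
  moreover have "continuous_on (\<Union>\<U>) f"
    by (rule continuous_on_open_Union) (auto simp: \<U>_def intro: homeomorphism_cont1)
  ultimately show ?thesis by simp
qed

lemma local_homeomorphism_on_open_map:
  assumes lh: "local_homeomorphism_on S f" and "open W" "W \<subseteq> S"
  shows "open (f ` W)"
  unfolding open_subopen[of "f ` W"]
proof
  fix y assume "y \<in> f ` W"
  then obtain x where x: "x \<in> W" "y = f x" by blast
  then have "x \<in> S" using \<open>W \<subseteq> S\<close> by blast
  then obtain U V g where UVg: "x \<in> U" "open U" "U \<subseteq> S" "open V" "homeomorphism U V f g"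
    by (rule local_homeomorphism_onE[OF lh])
  have "openin (top_of_set U) (W \<inter> U)"
    using \<open>open W\<close> UVg(2) by (intro open_subset) auto
  then have "openin (top_of_set V) (f ` (W \<inter> U))"
    by (rule homeomorphism_imp_open_map[OF UVg(5)])
  then have "open (f ` (W \<inter> U))"
    using UVg(4) by (rule openin_open_trans)
  then show "\<exists>T. open T \<and> y \<in> T \<and> T \<subseteq> f ` W"
    using x UVg(1) by blast
qed

lemma local_homeomorphism_on_finite_fibre:
  assumes lh: "local_homeomorphism_on S f" and "compact {x\<in>S. f x = y}"
  shows "finite {x\<in>S. f x = y}"
proof -
  let ?P = "{x\<in>S. f x = y}"
  have "\<forall>x\<in>?P. \<exists>U. x \<in> U \<and> open U \<and> inj_on f U"
  proof
    fix x assume "x \<in> ?P"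
    then have "x \<in> S" by simp
    then obtain U V g where "x \<in> U" "open U" "U \<subseteq> S" "open V" "homeomorphism U V f g"
      by (rule local_homeomorphism_onE[OF lh])
    then show "\<exists>U. x \<in> U \<and> open U \<and> inj_on f U"
      by (metis homeomorphism_apply1 inj_on_inverseI)
  qed
  then obtain U where U: "\<forall>x\<in>?P. x \<in> U x \<and> open (U x) \<and> inj_on f (U x)"
    by (rule bchoice[elim_format]) blast
  then obtain P' where P': "P' \<subseteq> ?P" "finite P'" "?P \<subseteq> (\<Union>x\<in>P'. U x)"
    by (metis (no_types, lifting) compactE_image[OF assms(2), of ?P U] UN_I subsetI)
  have "?P \<inter> U x \<subseteq> {x}" if "x \<in> P'" for x
  proof
    fix z assume z: "z \<in> ?P \<inter> U x"
    have "x \<in> ?P" using that P'(1) by blast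
    then have "inj_on f (U x)" "x \<in> U x" using U by blast+
    moreover have "f z = f x" using z \<open>x \<in> ?P\<close> by simp
    ultimately show "z \<in> {x}"
      using z inj_onD[of f "U x" z x] by blast
  qed
  then have "?P \<subseteq> P'"
    using P'(3) by blast
  then show ?thesis
    using P'(2) finite_subset by blast
qed

lemma local_homeomorphism_on_disjoint_nbhds:
  fixes f :: "'a::metric_space \<Rightarrow> 'b::topological_space"
  assumes lh: "local_homeomorphism_on S f" and "finite P" "P \<subseteq> S"
  obtains U g where
    "\<And>x. x \<in> P \<Longrightarrow> x \<in> U x \<and> open (U x) \<and> U x \<subseteq> S \<and> open (f ` U x) \<and>
            homeomorphism (U x) (f ` U x) f (g x)"
    "\<And>x z. \<lbrakk>x \<in> P; z \<in> P; x \<noteq> z\<rbrakk> \<Longrightarrow> U x \<inter> U z = {}"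
proof -
  have "\<forall>x\<in>P. \<exists>U V g. x \<in> U \<and> open U \<and> U \<subseteq> S \<and> homeomorphism U V f g"
  proof
    fix x assume "x \<in> P"
    then have "x \<in> S" using \<open>P \<subseteq> S\<close> by blast
    then obtain U V g where "x \<in> U" "open U" "U \<subseteq> S" "open V" "homeomorphism U V f g"
      by (rule local_homeomorphism_onE[OF lh])
    then show "\<exists>U V g. x \<in> U \<and> open U \<and> U \<subseteq> S \<and> homeomorphism U V f g"
      by blast
  qed
  then obtain U V g where UVg: "\<forall>x\<in>P. x \<in> U x \<and> open (U x) \<and> U x \<subseteq> S \<and> homeomorphism (U x) (V x) f (g x)"
    by metis
  have "\<forall>x\<in>P. \<exists>\<delta>>0. \<forall>z\<in>P. z \<noteq> x \<longrightarrow> \<delta> \<le> dist x z"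
    using finite_set_avoid[OF \<open>finite P\<close>] by blast
  then obtain \<delta> where \<delta>: "\<forall>x\<in>P. \<delta> x > 0 \<and> (\<forall>z\<in>P. z \<noteq> x \<longrightarrow> \<delta> x \<le> dist x z)"
    by metis
  define U' where "U' x = U x \<inter> ball x (\<delta> x / 2)" for x
  show thesis
  proof
    fix x assume "x \<in> P"
    then have "homeomorphism (U x) (V x) f (g x)" and "x \<in> U x" "open (U x)" "U x \<subseteq> S" "\<delta> x > 0"
      using UVg \<delta> by blast+
    moreover from this have "open (f ` U' x)"
      unfolding U'_def by (intro local_homeomorphism_on_open_map[OF lh]) auto
    ultimately show "x \<in> U' x \<and> open (U' x) \<and> U' x \<subseteq> S \<and> open (f ` U' x) \<and>
        homeomorphism (U' x) (f ` U' x) f (g x)"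
      unfolding U'_def by (auto intro: homeomorphism_of_subsets)
  next
    fix x z assume "x \<in> P" "z \<in> P" "x \<noteq> z"
    then have "\<delta> x \<le> dist x z" "\<delta> z \<le> dist z x"
      using \<delta> by auto
    then have "\<delta> x / 2 + \<delta> z / 2 \<le> dist x z"
      by (simp add: dist_commute)
    then show "U' x \<inter> U' z = {}"
      unfolding U'_def using disjoint_ballI by blast
  qed
qed

lemma continuous_on_compact_preimage_nbhd:
  fixes F :: "'a::topological_space \<Rightarrow> 'b::t2_space"
  assumes "compact C" "continuous_on C F" "open W" "{x\<in>C. F x = y} \<subseteq> W"
  obtains N where "open N" "y \<in> N" "C \<inter> F -` N \<subseteq> W"
proof
  have "continuous_on (C - W) F"
    using assms(2) by (rule continuous_on_subset) auto
  moreover have "compact (C - W)"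
    using assms(1,3) by (rule compact_diff)
  ultimately have "compact (F ` (C - W))"
    by (rule compact_continuous_image)
  then show "open (- F ` (C - W))"
    by (simp add: compact_imp_closed open_Compl)
  show "y \<in> - F ` (C - W)"
    using assms(4) by blast
  show "C \<inter> F -` (- F ` (C - W)) \<subseteq> W"
    by auto
qed

lemma evenly_covered_by_disjoint_homeomorphic_nbhds:
  assumes "open N"
    and hom: "\<And>x. x \<in> P \<Longrightarrow> open (U x) \<and> U x \<subseteq> S \<and> N \<subseteq> f ` U x \<and> homeomorphism (U x) (f ` U x) f (g x)"
    and disj: "\<And>x z. \<lbrakk>x \<in> P; z \<in> P; x \<noteq> z\<rbrakk> \<Longrightarrow> U x \<inter> U z = {}"
    and cover: "S \<inter> f -` N \<subseteq> (\<Union>x\<in>P. U x)"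
  shows "\<exists>v. \<Union>v = S \<inter> f -` N \<and> (\<forall>u\<in>v. openin (top_of_set S) u) \<and>
             pairwise disjnt v \<and> (\<forall>u\<in>v. \<exists>q. homeomorphism u N f q)"
proof -
  define v where "v = (\<lambda>x. U x \<inter> f -` N) ` P"
  have "U x \<subseteq> S" if "x \<in> P" for x
    using hom[OF that] by blast
  then have union: "\<Union>v = S \<inter> f -` N"
    unfolding v_def using cover by auto
  have sheet: "openin (top_of_set S) u \<and> (\<exists>q. homeomorphism u N f q)" if "u \<in> v" for u
  proof -
    obtain x where x: "x \<in> P" "u = U x \<inter> f -` N"
      using \<open>u \<in> v\<close> unfolding v_def by blast
    have Ux: "open (U x)" "U x \<subseteq> S" "N \<subseteq> f ` U x" and h: "homeomorphism (U x) (f ` U x) f (g x)"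
      using hom[OF x(1)] by blast+
    have "f ` u = N"
      using x(2) Ux(3) by blast
    then have "homeomorphism u N f (g x)"
      using homeomorphism_of_subsets[OF h, of u N N] x(2) Ux(3) by blast
    moreover have "open u"
      unfolding x(2) using homeomorphism_cont1[OF h] Ux(1) \<open>open N\<close> by (rule continuous_open_preimage)
    then have "openin (top_of_set S) u"
      using x(2) Ux(2) by (intro open_subset) auto
    ultimately show ?thesis
      by blast
  qed
  have disjoint: "pairwise disjnt v"
  proof (rule pairwiseI)
    fix u u' assume "u \<in> v" "u' \<in> v" "u \<noteq> u'"
    then obtain x z where "x \<in> P" "z \<in> P" "u = U x \<inter> f -` N" "u' = U z \<inter> f -` N"
      unfolding v_def by blast
    moreover from this have "x \<noteq> z"
      using \<open>u \<noteq> u'\<close> by blast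
    ultimately show "disjnt u u'"
      using disj unfolding disjnt_def by blast
  qed
  show ?thesis
    using union sheet disjoint by (intro exI[of _ v] conjI ballI) blast+
qed

text \<open>Properness of f over T is expressed through a continuous extension F to a compact set C
  whose values on C - S avoid T.\<close>

lemma local_homeomorphism_on_covering_space:
  fixes f F :: "'a::metric_space \<Rightarrow> 'b::t2_space"
  assumes lh: "local_homeomorphism_on S f"
    and C: "compact C" "S \<subseteq> C" "continuous_on C F"
    and Ff: "\<And>x. x \<in> S \<Longrightarrow> F x = f x"
    and boundary: "F ` (C - S) \<inter> T = {}" and im: "f ` S = T"
  shows "covering_space S f T"
proof
  show "continuous_on S f"
    using lh by (rule local_homeomorphism_on_imp_continuous_on)
  show "f ` S = T"
    by (fact im)
  have "open S"
    using lh by (rule local_homeomorphism_on_imp_open)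
  then have "open T"
    using local_homeomorphism_on_open_map[OF lh] im by blast
  fix y assume "y \<in> T"
  define P where "P = {x\<in>S. f x = y}"
  have fibre: "{x\<in>C. F x = y} = P"
    using C(2) Ff boundary \<open>y \<in> T\<close> unfolding P_def by force
  moreover have "closed {x\<in>C. F x = y}"
    using C(3) compact_imp_closed[OF C(1)] by (rule continuous_closed_preimage_constant)
  ultimately have "compact P"
    using C(1) by (metis (no_types, lifting) compact_Int_closed inf.absorb2 mem_Collect_eq subsetI)
  then have "finite P"
    using local_homeomorphism_on_finite_fibre[OF lh] unfolding P_def by blast
  obtain U g where
    hom: "\<And>x. x \<in> P \<Longrightarrow> x \<in> U x \<and> open (U x) \<and> U x \<subseteq> S \<and> open (f ` U x) \<and>
                          homeomorphism (U x) (f ` U x) f (g x)"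
    and disj: "\<And>x z. \<lbrakk>x \<in> P; z \<in> P; x \<noteq> z\<rbrakk> \<Longrightarrow> U x \<inter> U z = {}"
    using local_homeomorphism_on_disjoint_nbhds[OF lh \<open>finite P\<close>] unfolding P_def by blast
  have "open (\<Union>x\<in>P. U x)" "{x\<in>C. F x = y} \<subseteq> (\<Union>x\<in>P. U x)"
    using hom unfolding fibre by blast+
  then obtain N0 where N0: "open N0" "y \<in> N0" "C \<inter> F -` N0 \<subseteq> (\<Union>x\<in>P. U x)"
    by (rule continuous_on_compact_preimage_nbhd[OF C(1,3)])
  define N where "N = N0 \<inter> T \<inter> (\<Inter>x\<in>P. f ` U x)"
  have "open N"
    unfolding N_def using N0(1) \<open>open T\<close> \<open>finite P\<close> hom by (intro open_Int open_INT) auto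
  have "y \<in> N"
    unfolding N_def using N0(2) \<open>y \<in> T\<close> hom unfolding P_def by blast
  have "openin (top_of_set T) N"
    using \<open>open N\<close> by (intro open_subset) (auto simp: N_def)
  have cover: "S \<inter> f -` N \<subseteq> (\<Union>x\<in>P. U x)"
    using N0(3) C(2) Ff unfolding N_def by force
  have hom': "open (U x) \<and> U x \<subseteq> S \<and> N \<subseteq> f ` U x \<and> homeomorphism (U x) (f ` U x) f (g x)"
    if "x \<in> P" for x
    using hom[OF that] that unfolding N_def by blast
  have "\<exists>v. \<Union>v = S \<inter> f -` N \<and> (\<forall>u\<in>v. openin (top_of_set S) u) \<and>
                        pairwise disjnt v \<and> (\<forall>u\<in>v. \<exists>q. homeomorphism u N f q)"
    by (rule evenly_covered_by_disjoint_homeomorphic_nbhds[OF \<open>open N\<close> hom' disj cover])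
  then show "\<exists>N. y \<in> N \<and> openin (top_of_set T) N \<and>
             (\<exists>v. \<Union>v = S \<inter> f -` N \<and> (\<forall>u \<in> v. openin (top_of_set S) u) \<and>
                  pairwise disjnt v \<and> (\<forall>u \<in> v. \<exists>q. homeomorphism u N f q))"
    using \<open>y \<in> N\<close> \<open>openin (top_of_set T) N\<close> by (intro exI[of _ N] conjI)
qed

lemma covering_space_simply_connected_imp_homeomorphism:
  fixes f :: "'a::real_normed_vector \<Rightarrow> 'b::real_normed_vector"
  assumes cov: "covering_space S f T" and "connected S"
    and "simply_connected T" "locally path_connected T"
  obtains g where "homeomorphism S T f g"
proof (cases "S = {}")
  case True
  then show thesis
    using that covering_space_imp_surjective[OF cov] by auto
next
  case False
  then obtain x0 where "x0 \<in> S" by blast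
  then have "f x0 \<in> T"
    using covering_space_imp_surjective[OF cov] by blast
  obtain g where g: "continuous_on T g" "g \<in> T \<rightarrow> S" "g (f x0) = x0" "\<And>y. y \<in> T \<Longrightarrow> f (g y) = y"
    using covering_space_lift_strong[OF cov \<open>x0 \<in> S\<close> \<open>f x0 \<in> T\<close> assms(3,4), of id] by auto
  have contf: "continuous_on S f" and fS: "f ` S = T"
    using cov by (auto dest: covering_space_imp_continuous covering_space_imp_surjective)
  have "g (f x) = x" if "x \<in> S" for x
  proof -
    have "(g \<circ> f) x = id x"
    proof (rule covering_space_lift_unique[OF cov, of "g \<circ> f" x0 id S f])
      show "continuous_on S (g \<circ> f)"
        using continuous_on_compose[OF contf] g(1) fS by simp
      show "g \<circ> f \<in> S \<rightarrow> S"
        using g(2) fS by auto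
      show "\<And>x. x \<in> S \<Longrightarrow> f x = f ((g \<circ> f) x)"
        using g(4) fS by auto
    qed (use g(3) contf fS \<open>connected S\<close> \<open>x0 \<in> S\<close> that in auto)
    then show ?thesis by simp
  qed
  then have "homeomorphism S T f g"
    using contf fS g by (intro homeomorphismI) auto
  then show thesis by (rule that)
qed

lemma frontier_continuous_image_subset:
  fixes F :: "'a::topological_space \<Rightarrow> 'b::t2_space"
  assumes "compact (closure S)" "continuous_on (closure S) F" "open (F ` S)"
  shows "frontier (F ` S) \<subseteq> F ` frontier S"
proof -
  have "closed (F ` closure S)"
    using assms(1,2) by (intro compact_imp_closed compact_continuous_image)
  then have "closure (F ` S) \<subseteq> F ` closure S"
    by (intro closure_minimal image_mono closure_subset)
  then have "frontier (F ` S) \<subseteq> F ` closure S - F ` S"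
    using assms(3) by (auto simp: frontier_def interior_open)
  also have "\<dots> \<subseteq> F ` frontier S"
    using interior_subset unfolding frontier_def by blast
  finally show ?thesis .
qed

lemma jordan_curve_inside_outside:
  assumes "jordan_curve Y"
  shows "inside Y \<noteq> {} \<and> open (inside Y) \<and> connected (inside Y) \<and>
         outside Y \<noteq> {} \<and> open (outside Y) \<and> connected (outside Y) \<and>
         bounded (inside Y) \<and> \<not> bounded (outside Y) \<and>
         inside Y \<inter> outside Y = {} \<and> inside Y \<union> outside Y = - Y \<and>
         frontier (inside Y) = Y \<and> frontier (outside Y) = Y"
  using assms Jordan_inside_outside unfolding jordan_curve_def by blast

lemma simply_connected_inside_jordan_curve:
  assumes "jordan_curve Y"
  shows "simply_connected (inside Y)"
  using assms simply_connected_inside_simple_path unfolding jordan_curve_def by blast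

lemma frontier_subset_jordan_curve_imp_eq_inside:
  assumes Y: "jordan_curve Y"
    and W: "open W" "bounded W" "W \<noteq> {}" "frontier W \<subseteq> Y"
  shows "W = inside Y"
proof -
  have out: "connected (outside Y)" "\<not> bounded (outside Y)" "frontier (outside Y) = Y"
    and ins: "connected (inside Y)" "inside Y \<union> outside Y = - Y"
    using jordan_curve_inside_outside[OF Y] by auto
  have "W \<inter> outside Y = {}"
  proof (rule ccontr)
    assume "W \<inter> outside Y \<noteq> {}"
    moreover have "outside Y - W \<noteq> {}"
      using out(2) W(2) bounded_subset by (metis Diff_eq_empty_iff)
    ultimately have "outside Y \<inter> frontier W \<noteq> {}"
      using connected_Int_frontier[OF out(1)] by (simp add: Int_commute)
    then show False
      using W(4) outside_no_overlap by blast
  qed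
  then have "W \<inter> closure (outside Y) = {}"
    using W(1) open_Int_closure_eq_empty by blast
  moreover have "Y \<subseteq> closure (outside Y)"
    using out(3) unfolding frontier_def by blast
  ultimately have "W \<subseteq> inside Y"
    using \<open>W \<inter> outside Y = {}\<close> ins(2) by blast
  show ?thesis
  proof (rule ccontr)
    assume "W \<noteq> inside Y"
    then have "inside Y \<inter> W \<noteq> {}" "inside Y - W \<noteq> {}"
      using \<open>W \<subseteq> inside Y\<close> W(3) by blast+
    then have "inside Y \<inter> frontier W \<noteq> {}"
      by (rule connected_Int_frontier[OF ins(1)])
    then show False
      using W(4) inside_no_overlap by blast
  qed
qed

theorem lemma9:
  fixes X Y :: "complex set" and f :: "complex \<Rightarrow> complex"
  assumes "jordan_curve X" and "jordan_curve Y"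
    and "local_homeomorphism_on (inside X) f"
    and "bounded (f ` inside X)"
    and "\<exists>F. continuous_on (inside X \<union> X) F \<and> (\<forall>z\<in>inside X. F z = f z) \<and> F ` X \<subseteq> Y"
  shows "\<exists>g. homeomorphism (inside X) (inside Y) f g"
proof -
  obtain F where F: "continuous_on (inside X \<union> X) F" "\<And>z. z \<in> inside X \<Longrightarrow> F z = f z" "F ` X \<subseteq> Y"
    using assms(5) by blast
  have X: "inside X \<noteq> {}" "open (inside X)" "connected (inside X)" "bounded (inside X)"
      "frontier (inside X) = X"
    using jordan_curve_inside_outside[OF assms(1)] by auto
  have closure: "closure (inside X) = inside X \<union> X"
    using X(5) closure_Un_frontier by metis
  have compact: "compact (closure (inside X))"
    using X(4) by (simp add: compact_closure)
  have "f ` inside X = F ` inside X"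
    using F(2) by simp
  moreover have "open (f ` inside X)"
    by (rule local_homeomorphism_on_open_map[OF assms(3) X(2) order_refl])
  ultimately have "frontier (f ` inside X) \<subseteq> F ` X"
    using frontier_continuous_image_subset[OF compact] X(5) F(1) closure by simp
  then have "frontier (f ` inside X) \<subseteq> Y"
    using F(3) by (rule order_trans)
  moreover have "f ` inside X \<noteq> {}"
    using X(1) by simp
  ultimately have onto: "f ` inside X = inside Y"
    using frontier_subset_jordan_curve_imp_eq_inside[OF assms(2) \<open>open (f ` inside X)\<close> assms(4)]
    by simp
  have "F ` (inside X \<union> X - inside X) \<inter> inside Y = {}"
    using F(3) inside_no_overlap by blast
  then have "covering_space (inside X) f (inside Y)"
    using local_homeomorphism_on_covering_space[OF assms(3) compact[unfolded closure] Un_upper1 F(1,2)]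
      onto by simp
  moreover have "locally path_connected (inside Y)"
    using jordan_curve_inside_outside[OF assms(2)] by (simp add: open_imp_locally_path_connected)
  ultimately obtain g where "homeomorphism (inside X) (inside Y) f g"
    using covering_space_simply_connected_imp_homeomorphism X(3)
      simply_connected_inside_jordan_curve[OF assms(2)] by metis
  then show ?thesis by blast
qed

end
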